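(* Let $\kappa$ be a regular infinite cardinal and $\mu$ a singular cardinal with $\mathrm{cf}(\mu)=\kappa$. (1) If $\nu=\mu^{<\mu}$, then $\mathfrak q_\mu(\nu)\le\mathrm{cof}(\mathcal M_\kappa({}^{\mu}\mu,\mu))$. (2) If $\nu=\kappa^{<\mu}$, then $\mathfrak q_\mu(\nu)\le\mathrm{cof}(\mathcal M_\kappa({}^{\mu}2,\mu))$.
   Context: For ordinals $\delta,\rho$, ${}^{\delta}\rho$ is the set of functions $\delta\to\rho$; for a partial function $s\colon\delta\rightharpoonup\rho$, $[s]=\{f\in{}^{\delta}\rho: s\subseteq f\}$. The ${<}\mu$-box topology on ${}^{\delta}\rho$ has base $\{[s]: |\mathrm{dom}(s)|<\mu\}$; $(X,\mu)$ denotes $X$ with it. A set is $\kappa$-meagre if it is a union of at most $\kappa$ nowhere dense sets; $\mathcal M_\kappa(X,\tau)$ is the ideal of $\kappa$-meagre subsets; $\mathrm{cof}(\mathcal I)$ is the least size of $F\subseteq\mathcal I$ such that every $I\in\mathcal I$ is contained in some $J\in F$. For a cardinal $\nu$, $\mathfrak q_\mu(\nu)$ is the least size of a set $Q$ of functions $\nu\to[\mu]^{<\mu}$ such that for every function $g\colon\nu\to[\mu]^{<\mu}$ there is $f\in Q$ with $f(\gamma)\not\subseteq g(\gamma)$ for all $\gamma<\nu$. *)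

theory Defs
  imports "HOL-Analysis.Analysis"
begin

unbundle cardinal_syntax

text \<open>Cardinals are represented by cardinal well-orders (Card_order r); the ordinal
  underlying a cardinal r is Field r, ordered by r.\<close>

definition cf_is :: "'a rel \<Rightarrow> 'b rel \<Rightarrow> bool" where
  "cf_is r k \<longleftrightarrow>
     (\<exists>C. C \<subseteq> Field r \<and> cofinal C r \<and> (card_of C) =o k) \<and>
     (\<forall>C. C \<subseteq> Field r \<and> cofinal C r \<longrightarrow> k \<le>o (card_of C))"

text \<open>The set of all functions from an ordinal below the cardinal r into R, i.e.
  the union of the sets of functions alpha -> R for alpha < r; its size is R^(<r).\<close>
definition lt_pow :: "'a rel \<Rightarrow> 'c set \<Rightarrow> ('a \<Rightarrow> 'c) set" where
  "lt_pow r R = (\<Union>a\<in>Field r. underS r a \<rightarrow>\<^sub>E R)"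

definition cyl :: "'a set \<Rightarrow> 'c set \<Rightarrow> 'a set \<Rightarrow> ('a \<Rightarrow> 'c) \<Rightarrow> ('a \<Rightarrow> 'c) set" where
  "cyl M R A s = {f \<in> M \<rightarrow>\<^sub>E R. \<forall>x\<in>A. f x = s x}"

text \<open>The <mu-box topology on (Field r) -> R, where mu is the cardinal r.\<close>
definition box_top :: "'a rel \<Rightarrow> 'c set \<Rightarrow> ('a \<Rightarrow> 'c) topology" where
  "box_top r R = topology_generated_by
     {cyl (Field r) R A s | A s. A \<subseteq> Field r \<and> (card_of A) <o r \<and> s \<in> A \<rightarrow>\<^sub>E R}"

definition nowhere_dense_in :: "'x topology \<Rightarrow> 'x set \<Rightarrow> bool" where
  "nowhere_dense_in T N \<longleftrightarrow> N \<subseteq> topspace T \<and> T interior_of (T closure_of N) = {}"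

definition meagre_ideal :: "'b rel \<Rightarrow> 'x topology \<Rightarrow> 'x set set" where
  "meagre_ideal k T = {A. \<exists>F. (card_of F) \<le>o k \<and> (\<forall>N\<in>F. nowhere_dense_in T N) \<and> A = \<Union>F}"

definition cofinal_family :: "'x set set \<Rightarrow> 'x set set \<Rightarrow> bool" where
  "cofinal_family I F \<longleftrightarrow> F \<subseteq> I \<and> (\<forall>A\<in>I. \<exists>B\<in>F. A \<subseteq> B)"

definition small_subsets :: "'a rel \<Rightarrow> 'a set set" where
  "small_subsets r = {X. X \<subseteq> Field r \<and> (card_of X) <o r}"

definition q_family :: "'a rel \<Rightarrow> 'n set \<Rightarrow> ('n \<Rightarrow> 'a set) set \<Rightarrow> bool" where
  "q_family r N Q \<longleftrightarrow> Q \<subseteq> (N \<rightarrow>\<^sub>E small_subsets r) \<and>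
     (\<forall>g \<in> N \<rightarrow>\<^sub>E small_subsets r. \<exists>f\<in>Q. \<forall>\<gamma>\<in>N. \<not> f \<gamma> \<subseteq> g \<gamma>)"

text \<open>q_mu(nu) <= cof(I), unfolded: every cofinal family of I has size at least that
  of some q-witness family.\<close>
definition q_le_cof :: "'a rel \<Rightarrow> 'n set \<Rightarrow> 'x set set \<Rightarrow> bool" where
  "q_le_cof r N I \<longleftrightarrow>
     (\<forall>F. cofinal_family I F \<longrightarrow> (\<exists>Q. q_family r N Q \<and> (card_of Q) \<le>o (card_of F)))"

end

theory Submission
  imports Defs
begin

(*
  Fix a cofinal set C \<subseteq> \<mu> of size \<kappa> = cf \<mu>. Fewer than \<kappa> sets of size < \<mu> have a union
  of size < \<mu>, so conditions (functions on fewer than \<mu> coordinates) can be extended along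
  chains of length \<kappa>: no \<kappa>-meagre set contains a basic open set.

  A point x votes for v < c at level \<beta> if on the block of coordinates coded by (\<beta>, c, u, w),
  u, w < c, it agrees with the indicator of u = v except at fewer than |c| places. Votes are
  unique, so x casts fewer than \<mu> votes at each level. At each level x also decodes an element
  of \<nu> (a restriction of x, respectively a \<kappa>-valued function read off bits). Given g, the points
  having, at some level \<beta> < c, all their votes inside the value of g at the decoded element,
  a set of size at most |d|, form a nowhere dense set: a vote outside that set can be written
  into a fresh block. Over c, d \<in> C these sets form a \<kappa>-meagre set, covered by some B of any
  cofinal family F. Choosing for every element of \<nu> a point outside B that decodes it yields a
  family of vote sets f_B escaping every such g, so B \<mapsto> f_B witnesses q_\<mu>(\<nu>) \<le> |F|.
*)

(* Set_Algebras' infix =o would make every ordIso ambiguous. *)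
no_notation elt_set_eq (infix \<open>=o\<close> 50)

lemma card_of_Times_ordLess_infinite_Field:
  assumes r: "Card_order r" "\<not> finite (Field r)" and A: "|A| <o r" and B: "|B| <o r"
  shows "|A \<times> B| <o r"
proof -
  let ?S = "A <+> B"
  have S: "|?S| <o r" using card_of_Plus_ordLess_infinite_Field[OF r(2,1) A B] .
  show ?thesis
  proof (cases "finite ?S")
    case True
    hence "finite (A \<times> B)" by simp
    thus ?thesis
      using finite_ordLess_infinite[OF card_of_Well_order card_order_on_well_order_on[OF r(1)]] r(2)
      by (simp add: Field_card_of)
  next
    case False
    have "|A \<times> B| \<le>o |?S \<times> ?S|"
      using card_of_Plus1 card_of_Plus2 card_of_Times_mono1 card_of_Times_mono2 ordLeq_transitive by blast
    also have "|?S \<times> ?S| =o |?S|" using False by (rule card_of_Times_same_infinite)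
    finally show ?thesis using S ordLeq_ordLess_trans by blast
  qed
qed

lemma ex_not_in_ordLess:
  assumes "|X| <o |Y|" shows "\<exists>v\<in>Y. v \<notin> X"
proof (rule ccontr)
  assume "\<not> ?thesis"
  hence "|Y| \<le>o |X|" by (intro card_of_mono1) blast
  thus False using assms not_ordLess_ordLeq by blast
qed

lemma underS_trichotomy:
  assumes "Well_order r" "i \<in> Field r" "j \<in> Field r"
  shows "i = j \<or> i \<in> underS r j \<or> j \<in> underS r i"
  using assms unfolding well_order_on_def linear_order_on_def total_on_def underS_def by blast

lemma underS_subset_underS:
  assumes "Well_order r" "b \<in> underS r a"
  shows "underS r b \<subseteq> underS r a"
  using assms by (intro underS_incr) (auto simp: underS_def order_on_defs)

section \<open>Cardinals below a singular cardinal\<close>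

locale singular_cofinality =
  fixes k :: "'b rel" and r :: "'a rel"
  assumes Card_order_k: "Card_order k" and infinite_k: "\<not> finite (Field k)"
    and Card_order_r: "Card_order r" and infinite_r: "\<not> finite (Field r)"
    and k_less_r: "k <o r" and cf_r: "cf_is r k"
begin

abbreviation small :: "'a set \<Rightarrow> bool" where
  "small A \<equiv> A \<in> small_subsets r"

lemma Well_order_r: "Well_order r" and Well_order_k: "Well_order k"
  using Card_order_r Card_order_k card_order_on_well_order_on by blast+

lemma finite_ordLess_r: "finite A \<Longrightarrow> |A| <o r"
  using finite_ordLess_infinite[OF card_of_Well_order Well_order_r] infinite_r
  by (simp add: Field_card_of)

lemma Times_ordLess_r: "|A| <o r \<Longrightarrow> |B| <o r \<Longrightarrow> |A \<times> B| <o r"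
  using card_of_Times_ordLess_infinite_Field Card_order_r infinite_r by blast

lemma Field_k_ordLess_r: "|Field k| <o r"
  using card_of_Field_ordIso[OF Card_order_k] k_less_r ordIso_ordLess_trans by blast

lemma small_Un: "small A \<Longrightarrow> small B \<Longrightarrow> small (A \<union> B)"
  using card_of_Un_ordLess_infinite_Field[OF infinite_r Card_order_r]
  by (auto simp: small_subsets_def)

lemma small_subset: "small B \<Longrightarrow> A \<subseteq> B \<Longrightarrow> small A"
  unfolding small_subsets_def using card_of_mono1 ordLeq_ordLess_trans by blast

lemma small_underS: "a \<in> Field r \<Longrightarrow> small (underS r a)"
  using card_of_underS[OF Card_order_r] Order_Relation.underS_Field by (simp add: small_subsets_def)

definition cof_set :: "'a set" where
  "cof_set = (SOME C. C \<subseteq> Field r \<and> cofinal C r \<and> |C| =o k)"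

lemma cof_set: "cof_set \<subseteq> Field r" "cofinal cof_set r" "|cof_set| =o k"
proof -
  have "\<exists>C. C \<subseteq> Field r \<and> cofinal C r \<and> |C| =o k" using cf_r unfolding cf_is_def by blast
  hence "cof_set \<subseteq> Field r \<and> cofinal cof_set r \<and> |cof_set| =o k"
    unfolding cof_set_def by (rule someI_ex)
  thus "cof_set \<subseteq> Field r" "cofinal cof_set r" "|cof_set| =o k" by auto
qed

lemma cof_set_ordLess_r: "|cof_set| <o r"
  using cof_set(3) k_less_r ordIso_ordLess_trans by blast

lemma infinite_cof_set: "\<not> finite cof_set"
  using cof_set(3) card_of_Field_ordIso[OF Card_order_k] infinite_k
    ordIso_transitive ordIso_symmetric card_of_ordIso_finite by blast

lemma exists_cof_set_above: "a \<in> Field r \<Longrightarrow> \<exists>c\<in>cof_set. a \<in> underS r c"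
  using cof_set(2) unfolding cofinal_def underS_def by blast

lemma exists_underS_greater:
  assumes "|A| <o r" shows "\<exists>b\<in>Field r. |A| <o |underS r b|"
proof (rule ccontr)
  assume "\<not> ?thesis"
  hence le: "\<forall>b\<in>Field r. |underS r b| \<le>o |A|"
    using ordLess_or_ordLeq[OF card_of_Well_order card_of_Well_order] by blast
  have "Field r \<subseteq> (\<Union>c\<in>cof_set. underS r c)" using exists_cof_set_above by blast
  hence "|Field r| \<le>o |\<Union>c\<in>cof_set. underS r c|" by (rule card_of_mono1)
  also have "|\<Union>c\<in>cof_set. underS r c| \<le>o |SIGMA c:cof_set. underS r c|"
    by (rule card_of_UNION_Sigma)
  also have "|SIGMA c:cof_set. underS r c| \<le>o |cof_set \<times> A|"
    using le cof_set(1) by (intro card_of_Sigma_mono1) blast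
  also have "|cof_set \<times> A| <o r" using Times_ordLess_r[OF cof_set_ordLess_r assms] .
  finally show False using card_of_Field_ordIso[OF Card_order_r] not_ordLess_ordIso by blast
qed

lemma exists_cof_set_greater:
  assumes "|A| <o r" shows "\<exists>c\<in>cof_set. |A| <o |underS r c|"
proof -
  obtain b where b: "b \<in> Field r" "|A| <o |underS r b|" using exists_underS_greater assms by blast
  then obtain c where c: "c \<in> cof_set" "b \<in> underS r c" using exists_cof_set_above by blast
  have "|underS r b| \<le>o |underS r c|"
    using underS_subset_underS[OF Well_order_r c(2)] by (rule card_of_mono1)
  thus ?thesis using b(2) c(1) ordLess_ordLeq_trans by blast
qed

lemma UNION_ordLess_r:
  assumes I: "|I| <o k" and A: "\<forall>i\<in>I. |A i| <o r"
  shows "|\<Union>i\<in>I. A i| <o r"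
proof -
  have "\<forall>i\<in>I. \<exists>b\<in>Field r. |A i| <o |underS r b|" using exists_underS_greater A by blast
  then obtain b where b: "\<forall>i\<in>I. b i \<in> Field r \<and> |A i| <o |underS r (b i)|" by metis
  have "k \<le>o |b ` I|" if "cofinal (b ` I) r" using that b cf_r unfolding cf_is_def by blast
  hence "\<not> cofinal (b ` I) r"
    using card_of_image[of b I] I ordLeq_ordLess_trans not_ordLess_ordLeq by blast
  then obtain a where a: "a \<in> Field r" "\<forall>i\<in>I. a = b i \<or> (a, b i) \<notin> r"
    unfolding cofinal_def by auto
  have "(b i, a) \<in> r" if "i \<in> I" for i
    using a b that Well_order_r
    unfolding well_order_on_def linear_order_on_def partial_order_on_def preorder_on_def
      refl_on_def total_on_def by metis
  hence le: "\<forall>i\<in>I. |A i| \<le>o |underS r a|"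
    using b underS_incr[of r] Well_order_r card_of_mono1 ordLess_ordLeq_trans ordLess_imp_ordLeq
    unfolding order_on_defs by metis
  have "|\<Union>i\<in>I. A i| \<le>o |SIGMA i:I. A i|" by (rule card_of_UNION_Sigma)
  also have "|SIGMA i:I. A i| \<le>o |I \<times> underS r a|" using le by (rule card_of_Sigma_mono1)
  also have "|I \<times> underS r a| <o r"
    using Times_ordLess_r[OF ordLess_transitive[OF I k_less_r] card_of_underS[OF Card_order_r a(1)]] .
  finally show ?thesis .
qed

lemma small_UNION: "|I| <o k \<Longrightarrow> \<forall>i\<in>I. small (A i) \<Longrightarrow> small (\<Union>i\<in>I. A i)"
  using UNION_ordLess_r[of I A] by (auto simp: small_subsets_def)

lemma exists_cof_set_large_block:
  assumes "small L" shows "\<exists>c\<in>cof_set. |L| <o |underS r c| \<and> \<not> finite (underS r c)"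
proof -
  have "|L <+> Field k| <o r"
    using card_of_Plus_ordLess_infinite_Field[OF infinite_r Card_order_r] Field_k_ordLess_r assms
    by (auto simp: small_subsets_def)
  then obtain c where c: "c \<in> cof_set" "|L <+> Field k| <o |underS r c|"
    using exists_cof_set_greater by blast
  have "|L| <o |underS r c|" using card_of_Plus1 c(2) by (rule ordLeq_ordLess_trans)
  moreover have "|Field k| \<le>o |underS r c|"
    using card_of_Plus2 c(2) ordLeq_ordLess_trans ordLess_imp_ordLeq by blast
  hence "\<not> finite (underS r c)" using card_of_ordLeq_finite infinite_k by blast
  ultimately show ?thesis using c(1) by blast
qed

lemma Times_Field_r_absorb: "|A| \<le>o |Field r| \<Longrightarrow> |Field r \<times> A| \<le>o |Field r|"
  using card_of_Times_mono2 card_of_Times_same_infinite[OF infinite_r] ordLeq_ordIso_trans by blast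

definition code4 :: "'a \<times> 'a \<times> 'a \<times> 'a \<Rightarrow> 'a" where
  "code4 = (SOME h. inj_on h (Field r \<times> Field r \<times> Field r \<times> Field r) \<and>
                    h ` (Field r \<times> Field r \<times> Field r \<times> Field r) \<subseteq> Field r)"

lemma code4: "inj_on code4 (Field r \<times> Field r \<times> Field r \<times> Field r)"
  "code4 ` (Field r \<times> Field r \<times> Field r \<times> Field r) \<subseteq> Field r"
proof -
  have "|Field r \<times> Field r \<times> Field r \<times> Field r| \<le>o |Field r|"
    by (intro Times_Field_r_absorb ordLeq_refl[OF card_of_Card_order])
  hence "\<exists>h. inj_on h (Field r \<times> Field r \<times> Field r \<times> Field r) \<and>
             h ` (Field r \<times> Field r \<times> Field r \<times> Field r) \<subseteq> Field r"
    by (simp only: card_of_ordLeq[symmetric])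
  hence "inj_on code4 (Field r \<times> Field r \<times> Field r \<times> Field r) \<and>
         code4 ` (Field r \<times> Field r \<times> Field r \<times> Field r) \<subseteq> Field r"
    unfolding code4_def by (rule someI_ex)
  thus "inj_on code4 (Field r \<times> Field r \<times> Field r \<times> Field r)"
    "code4 ` (Field r \<times> Field r \<times> Field r \<times> Field r) \<subseteq> Field r" by auto
qed

lemma inj_on_code4_block:
  assumes "\<beta> \<in> Field r" "c \<in> Field r"
  shows "inj_on (\<lambda>p. code4 (\<beta>, c, p)) (underS r c \<times> underS r c)"
proof (rule inj_onI)
  fix p q assume pq: "p \<in> underS r c \<times> underS r c" "q \<in> underS r c \<times> underS r c"
    and eq: "code4 (\<beta>, c, p) = code4 (\<beta>, c, q)"
  have "underS r c \<times> underS r c \<subseteq> Field r \<times> Field r" by (intro Sigma_mono Order_Relation.underS_Field)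
  hence "(\<beta>, c, p) \<in> Field r \<times> Field r \<times> Field r \<times> Field r"
    "(\<beta>, c, q) \<in> Field r \<times> Field r \<times> Field r \<times> Field r" using assms pq by blast+
  thus "p = q" using inj_onD[OF code4(1) eq] by simp
qed
end

section \<open>The box topology and a Baire category theorem\<close>

locale box_space = singular_cofinality k r for k :: "'b rel" and r :: "'a rel" +
  fixes R :: "'c set" and r0 r1 :: 'c
  assumes r0_in_R: "r0 \<in> R" and r1_in_R: "r1 \<in> R" and r0_neq_r1: "r0 \<noteq> r1"
begin

abbreviation space :: "('a \<Rightarrow> 'c) set" where
  "space \<equiv> Field r \<rightarrow>\<^sub>E R"

abbreviation cy :: "'a set \<Rightarrow> ('a \<Rightarrow> 'c) \<Rightarrow> ('a \<Rightarrow> 'c) set" where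
  "cy A s \<equiv> cyl (Field r) R A s"

abbreviation T :: "('a \<Rightarrow> 'c) topology" where
  "T \<equiv> box_top r R"

definition box_basis :: "('a \<Rightarrow> 'c) set set" where
  "box_basis = {cy A s | A s. A \<subseteq> Field r \<and> |A| <o r \<and> s \<in> A \<rightarrow>\<^sub>E R}"

lemma box_top_eq: "T = topology_generated_by box_basis"
  by (simp add: box_top_def box_basis_def)

lemma cyl_subset_space: "cy A s \<subseteq> space"
  by (auto simp: cyl_def)

lemma cyl_antimono: "A \<subseteq> A' \<Longrightarrow> \<forall>\<delta>\<in>A. z \<delta> = y \<delta> \<Longrightarrow> cy A' z \<subseteq> cy A y"
  by (auto simp: cyl_def)

lemma topspace_box_top: "topspace T = space"
proof -
  have "cy {} (\<lambda>_. undefined) = space" by (auto simp: cyl_def)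
  moreover have "cy {} (\<lambda>_. undefined) \<in> box_basis"
    unfolding box_basis_def using finite_ordLess_r[of "{}"] by force
  moreover have "\<Union>box_basis \<subseteq> space" unfolding box_basis_def using cyl_subset_space by blast
  ultimately have "\<Union>box_basis = space" by blast
  thus ?thesis by (simp add: box_top_eq)
qed

lemma openin_cyl:
  assumes "small A" "s \<in> A \<rightarrow> R" shows "openin T (cy A s)"
proof -
  have "cy A s = cy A (restrict s A)" by (auto simp: cyl_def)
  hence "cy A s \<in> box_basis"
    using assms unfolding box_basis_def small_subsets_def by fastforce
  thus ?thesis
    unfolding box_top_eq openin_topology_generated_by_iff by (rule generate_topology_on.Basis)
qed

lemma box_nhds_base:
  assumes "openin T U" "y \<in> U" shows "\<exists>A. small A \<and> cy A y \<subseteq> U"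
proof -
  have "generate_topology_on box_basis U"
    using assms(1) by (simp add: box_top_eq openin_topology_generated_by_iff)
  thus ?thesis using assms(2)
  proof (induction rule: generate_topology_on.induct)
    case (Int U V)
    then obtain A B where "small A" "cy A y \<subseteq> U" "small B" "cy B y \<subseteq> V" by blast
    moreover have "cy (A \<union> B) y \<subseteq> cy A y \<inter> cy B y" by (auto simp: cyl_def)
    ultimately show ?case using small_Un by blast
  next
    case (UN K)
    then obtain U where "U \<in> K" "y \<in> U" by auto
    thus ?case using UN.IH by blast
  next
    case (Basis U)
    then obtain A s where U: "U = cy A s" "A \<subseteq> Field r" "|A| <o r"
      unfolding box_basis_def by blast
    have "cy A y = cy A s" using Basis(2) U(1) by (auto simp: cyl_def)
    moreover have "small A" using U(2,3) by (simp add: small_subsets_def)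
    ultimately show ?case using U(1) by blast
  qed simp
qed

definition default_ext :: "'a set \<Rightarrow> ('a \<Rightarrow> 'c) \<Rightarrow> 'a \<Rightarrow> 'c" where
  "default_ext A s = (\<lambda>\<delta>. if \<delta> \<in> A then s \<delta> else if \<delta> \<in> Field r then r0 else undefined)"

lemma default_ext_in_cyl: "A \<subseteq> Field r \<Longrightarrow> s \<in> A \<rightarrow> R \<Longrightarrow> default_ext A s \<in> cy A s"
  using r0_in_R by (auto simp: default_ext_def cyl_def)

definition condition :: "'a set \<times> ('a \<Rightarrow> 'c) \<Rightarrow> bool" where
  "condition p \<longleftrightarrow> small (fst p) \<and> snd p \<in> fst p \<rightarrow> R"

definition extends :: "'a set \<times> ('a \<Rightarrow> 'c) \<Rightarrow> 'a set \<times> ('a \<Rightarrow> 'c) \<Rightarrow> bool" where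
  "extends p q \<longleftrightarrow> fst p \<subseteq> fst q \<and> (\<forall>\<delta>\<in>fst p. snd q \<delta> = snd p \<delta>)"

abbreviation cyl_of :: "'a set \<times> ('a \<Rightarrow> 'c) \<Rightarrow> ('a \<Rightarrow> 'c) set" where
  "cyl_of p \<equiv> cy (fst p) (snd p)"
lemma extends_refl [simp]: "extends p p"
  by (simp add: extends_def)

lemma extends_trans: "extends p q \<Longrightarrow> extends q s \<Longrightarrow> extends p s"
  by (auto simp: extends_def)

lemma openin_cyl_of: "condition p \<Longrightarrow> openin T (cyl_of p)"
  by (simp add: condition_def openin_cyl)

lemma cyl_of_nonempty: "condition p \<Longrightarrow> cyl_of p \<noteq> {}"
  using default_ext_in_cyl[of "fst p" "snd p"] by (auto simp: condition_def small_subsets_def)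

lemma cyl_of_extends: "extends p q \<Longrightarrow> cyl_of q \<subseteq> cyl_of p"
  unfolding extends_def by (rule cyl_antimono) auto

lemma nowhere_denseI:
  assumes "N \<subseteq> space"
    and "\<And>A y. small A \<Longrightarrow> y \<in> space \<Longrightarrow>
          \<exists>q. condition q \<and> extends (A, y) q \<and> cyl_of q \<inter> N = {}"
  shows "nowhere_dense_in T N"
proof -
  have "y \<notin> T interior_of (T closure_of N)" for y
  proof
    let ?U = "T interior_of (T closure_of N)"
    assume y: "y \<in> ?U"
    obtain A where A: "small A" "cy A y \<subseteq> ?U" using box_nhds_base[OF openin_interior_of y] by blast
    have "y \<in> topspace T" using interior_of_subset_topspace y by (rule subsetD)
    hence "y \<in> space" by (simp add: topspace_box_top)
    then obtain q where q: "condition q" "extends (A, y) q" "cyl_of q \<inter> N = {}"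
      using assms(2)[OF A(1)] by blast
    have "cyl_of q \<subseteq> cy A y" using cyl_of_extends[OF q(2)] by simp
    also have "\<dots> \<subseteq> T closure_of N" using A(2) interior_of_subset by (rule order_trans)
    finally have "cyl_of q \<subseteq> T closure_of N" .
    moreover have "cyl_of q \<inter> T closure_of N = {}"
      using openin_cyl_of[OF q(1)] q(3) by (simp add: openin_Int_closure_of_eq_empty)
    ultimately show False using cyl_of_nonempty[OF q(1)] by blast
  qed
  hence "T interior_of (T closure_of N) = {}" by blast
  thus ?thesis using assms(1) by (simp add: nowhere_dense_in_def topspace_box_top)
qed

lemma nowhere_dense_avoid:
  assumes N: "nowhere_dense_in T N" and p: "condition p"
  shows "\<exists>q. condition q \<and> extends p q \<and> cyl_of q \<inter> N = {}"
proof -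
  have N': "N \<subseteq> space" "T interior_of (T closure_of N) = {}"
    using N topspace_box_top by (auto simp: nowhere_dense_in_def)
  have "\<not> cyl_of p \<subseteq> T closure_of N"
  proof
    assume "cyl_of p \<subseteq> T closure_of N"
    hence "cyl_of p \<subseteq> T interior_of (T closure_of N)"
      using openin_cyl_of[OF p] by (rule interior_of_maximal)
    thus False using N'(2) cyl_of_nonempty[OF p] by blast
  qed
  then obtain y where y: "y \<in> cyl_of p" "y \<notin> T closure_of N" by blast
  let ?V = "cyl_of p \<inter> (topspace T - T closure_of N)"
  have ysp: "y \<in> space" using y(1) cyl_subset_space by blast
  have "openin T ?V" using openin_cyl_of[OF p] by (simp add: openin_Int openin_diff)
  moreover have "y \<in> ?V" using y ysp by (simp add: topspace_box_top)
  ultimately obtain A where A: "small A" "cy A y \<subseteq> ?V" using box_nhds_base by blast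
  have "N \<subseteq> T closure_of N" by (rule closure_of_subset) (simp add: N'(1) topspace_box_top)
  moreover have "cy (fst p \<union> A) y \<subseteq> cy A y" by (rule cyl_antimono) auto
  ultimately have "cy (fst p \<union> A) y \<inter> N = {}" using A(2) by blast
  moreover have "condition (fst p \<union> A, y)"
    using small_Un[OF _ A(1)] p ysp by (auto simp: condition_def small_subsets_def)
  moreover have "extends p (fst p \<union> A, y)" using y(1) by (auto simp: extends_def cyl_def)
  ultimately show ?thesis by (intro exI[of _ "(fst p \<union> A, y)"]) simp
qed

definition compatible :: "('a set \<times> ('a \<Rightarrow> 'c)) set \<Rightarrow> bool" where
  "compatible X \<longleftrightarrow> (\<forall>p\<in>X. \<forall>q\<in>X. \<forall>\<delta>\<in>fst p \<inter> fst q. snd p \<delta> = snd q \<delta>)"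

definition join :: "('a set \<times> ('a \<Rightarrow> 'c)) set \<Rightarrow> 'a set \<times> ('a \<Rightarrow> 'c)" where
  "join X = (\<Union>(fst ` X), \<lambda>\<delta>. snd (SOME p. p \<in> X \<and> \<delta> \<in> fst p) \<delta>)"

lemma compatible_chain:
  assumes "\<And>p q. p \<in> X \<Longrightarrow> q \<in> X \<Longrightarrow> extends p q \<or> extends q p"
  shows "compatible X"
  unfolding compatible_def
proof (intro ballI)
  fix p q \<delta> assume "p \<in> X" "q \<in> X" "\<delta> \<in> fst p \<inter> fst q"
  thus "snd p \<delta> = snd q \<delta>" using assms[of p q] by (auto simp: extends_def)
qed

lemma extends_join:
  assumes X: "compatible X" and p: "p \<in> X" shows "extends p (join X)"
proof -
  have "snd (join X) \<delta> = snd p \<delta>" if \<delta>: "\<delta> \<in> fst p" for \<delta>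
  proof -
    let ?q = "SOME q. q \<in> X \<and> \<delta> \<in> fst q"
    have "\<exists>q. q \<in> X \<and> \<delta> \<in> fst q" using p \<delta> by blast
    hence "?q \<in> X" "\<delta> \<in> fst ?q" by (rule someI_ex[THEN conjunct1], rule someI_ex[THEN conjunct2])
    hence "snd ?q \<delta> = snd p \<delta>" using X p \<delta> unfolding compatible_def by blast
    thus ?thesis by (simp add: join_def)
  qed
  thus ?thesis using p by (auto simp: extends_def join_def)
qed

lemma join_values:
  assumes X: "compatible X" and "\<forall>p\<in>X. snd p \<in> fst p \<rightarrow> R"
  shows "snd (join X) \<in> fst (join X) \<rightarrow> R"
proof
  fix \<delta> assume "\<delta> \<in> fst (join X)"
  then obtain p where p: "p \<in> X" "\<delta> \<in> fst p" by (auto simp: join_def)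
  hence "snd (join X) \<delta> = snd p \<delta>" using extends_join[OF X p(1)] by (simp add: extends_def)
  thus "snd (join X) \<delta> \<in> R" using assms(2) p by auto
qed

lemma condition_join:
  assumes "compatible X" "\<forall>p\<in>X. condition p" "small (\<Union>(fst ` X))"
  shows "condition (join X)"
  using join_values[OF assms(1)] assms(2,3) by (simp add: condition_def join_def)

definition avoid :: "('a \<Rightarrow> 'c) set \<Rightarrow> 'a set \<times> ('a \<Rightarrow> 'c) \<Rightarrow> 'a set \<times> ('a \<Rightarrow> 'c)" where
  "avoid N p = (SOME q. condition q \<and> extends p q \<and> cyl_of q \<inter> N = {})"

lemma avoid:
  assumes "nowhere_dense_in T N" "condition p"
  shows "condition (avoid N p) \<and> extends p (avoid N p) \<and> cyl_of (avoid N p) \<inter> N = {}"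
  unfolding avoid_def by (rule someI_ex) (rule nowhere_dense_avoid[OF assms])

lemma extends_linear:
  assumes "i \<in> Field k" "j \<in> Field k"
    and "\<forall>i'\<in>underS k i. extends (t i') (t i)" "\<forall>j'\<in>underS k j. extends (t j') (t j)"
  shows "extends (t i) (t j) \<or> extends (t j) (t i)"
  using underS_trichotomy[OF Well_order_k assms(1,2)] assms(3,4) by auto

lemma chain_limit_point:
  assumes cond: "\<forall>i\<in>I. condition (t i)"
    and chain: "\<And>i j. i \<in> I \<Longrightarrow> j \<in> I \<Longrightarrow> extends (t i) (t j) \<or> extends (t j) (t i)"
  shows "\<exists>x\<in>space. \<forall>i\<in>I. x \<in> cyl_of (t i)"
proof -
  let ?J = "join (t ` I)"
  have comp: "compatible (t ` I)" using chain by (intro compatible_chain) blast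
  have "fst ?J \<subseteq> Field r" using cond by (auto simp: join_def condition_def small_subsets_def)
  moreover have "snd ?J \<in> fst ?J \<rightarrow> R" using join_values[OF comp] cond by (simp add: condition_def)
  ultimately have x: "default_ext (fst ?J) (snd ?J) \<in> cyl_of ?J" by (rule default_ext_in_cyl)
  have "cyl_of ?J \<subseteq> cyl_of (t i)" if "i \<in> I" for i
    using extends_join[OF comp] that by (intro cyl_of_extends) blast
  moreover have "default_ext (fst ?J) (snd ?J) \<in> space" using cyl_subset_space x by (rule subsetD)
  ultimately show ?thesis using x by (meson subsetD)
qed

(* Stage i joins the earlier stages, which is a condition because fewer than cf \<mu> small
   domains have small union, and then extends the join to avoid Nn i. *)
lemma exists_avoiding_chain:
  assumes nd: "\<And>i. nowhere_dense_in T (Nn i)" and p0: "condition p0"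
  obtains t where "\<And>i. i \<in> Field k \<Longrightarrow> condition (t i) \<and> extends p0 (t i) \<and>
      (\<forall>j\<in>underS k i. extends (t j) (t i)) \<and> cyl_of (t i) \<inter> Nn i = {}"
proof -
  define H where "H t i = avoid (Nn i) (join (insert p0 (t ` underS k i)))" for t i
  have wo: "wo_rel k" using Well_order_k by (simp add: wo_rel_def)
  have "wo_rel.adm_wo k H"
    unfolding wo_rel.adm_wo_def[OF wo] H_def by (metis image_cong)
  hence t: "wo_rel.worec k H i = H (wo_rel.worec k H) i" for i
    by (metis wo_rel.worec_fixpoint[OF wo])
  define good where "good t i \<longleftrightarrow> condition (t i) \<and> extends p0 (t i) \<and>
      (\<forall>j\<in>underS k i. extends (t j) (t i)) \<and> cyl_of (t i) \<inter> Nn i = {}" for t i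
  have "good (wo_rel.worec k H) i" if "i \<in> Field k" for i
    using that
  proof (induction i rule: wo_rel.well_order_induct[OF wo])
    case (1 i)
    let ?t = "wo_rel.worec k H"
    let ?X = "insert p0 (?t ` underS k i)"
    have IH: "good ?t j" if "j \<in> underS k i" for j
      using 1 that by (auto simp: underS_def Field_def)
    have "extends p q \<or> extends q p" if "p \<in> ?X" "q \<in> ?X" for p q
    proof -
      have "extends p0 s" if "s \<in> ?X" for s using that IH by (auto simp: good_def)
      moreover have "extends (?t j) (?t j') \<or> extends (?t j') (?t j)"
        if "j \<in> underS k i" "j' \<in> underS k i" for j j'
        using IH[OF that(1)] IH[OF that(2)] that
        by (intro extends_linear) (auto simp: good_def dest: underS_Field)
      ultimately show ?thesis using that by blast
    qed
    hence comp: "compatible ?X" by (rule compatible_chain)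
    have "small (\<Union>j\<in>underS k i. fst (?t j))"
      using IH card_of_underS[OF Card_order_k 1(2)] by (intro small_UNION) (auto simp: good_def condition_def)
    hence "small (\<Union>(fst ` ?X))" using small_Un p0 by (simp add: condition_def)
    hence "condition (join ?X)" using comp IH p0 by (intro condition_join) (auto simp: good_def)
    moreover have "?t i = avoid (Nn i) (join ?X)" using t[of i] unfolding H_def .
    ultimately have "condition (?t i)" "extends (join ?X) (?t i)" "cyl_of (?t i) \<inter> Nn i = {}"
      using avoid[OF nd] by simp_all
    moreover have "extends p (join ?X)" if "p \<in> ?X" for p using extends_join[OF comp that] .
    ultimately show "good ?t i" unfolding good_def using extends_trans by blast
  qed
  thus ?thesis using that unfolding good_def by blast
qed

theorem meagre_avoids_cyl:
  assumes B: "B \<in> meagre_ideal k T" and p0: "condition p0"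
  shows "\<exists>x\<in>cyl_of p0. x \<notin> B"
proof -
  obtain F where F: "|F| \<le>o k" "\<forall>N\<in>F. nowhere_dense_in T N" "B = \<Union>F"
    using B unfolding meagre_ideal_def by blast
  have "|F| \<le>o |Field k|"
    using ordLeq_ordIso_trans[OF F(1) ordIso_symmetric[OF card_of_Field_ordIso[OF Card_order_k]]] .
  then obtain e where e: "inj_on e F" "e ` F \<subseteq> Field k" by (auto simp: card_of_ordLeq[symmetric])
  define Nn where "Nn i = (if i \<in> e ` F then inv_into F e i else {})" for i
  have nd: "nowhere_dense_in T (Nn i)" for i
    using F(2) inv_into_into[of i e F] by (auto simp: Nn_def nowhere_dense_in_def)
  have Nn: "Nn (e N) = N" if "N \<in> F" for N using e(1) that by (simp add: Nn_def)
  obtain t where t: "\<And>i. i \<in> Field k \<Longrightarrow> condition (t i) \<and> extends p0 (t i) \<and>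
      (\<forall>j\<in>underS k i. extends (t j) (t i)) \<and> cyl_of (t i) \<inter> Nn i = {}"
    using exists_avoiding_chain[of Nn, OF nd p0] by blast
  have "extends (t i) (t j) \<or> extends (t j) (t i)" if "i \<in> Field k" "j \<in> Field k" for i j
    using that t[OF that(1)] t[OF that(2)] by (intro extends_linear) auto
  moreover have "\<forall>i\<in>Field k. condition (t i)" using t by blast
  ultimately obtain x where x: "\<forall>i\<in>Field k. x \<in> cyl_of (t i)"
    using chain_limit_point[of "Field k" t] by blast
  obtain i0 where i0: "i0 \<in> Field k" using infinite_k by fastforce
  have "cyl_of (t i0) \<subseteq> cyl_of p0" using t[OF i0] cyl_of_extends by blast
  hence "x \<in> cyl_of p0" using x i0 by (meson subsetD)
  moreover have "x \<notin> N" if N: "N \<in> F" for N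
  proof -
    have "e N \<in> Field k" using e(2) N by blast
    hence "x \<in> cyl_of (t (e N))" "cyl_of (t (e N)) \<inter> Nn (e N) = {}" using x t by auto
    thus ?thesis using Nn[OF N] by blast
  qed
  ultimately show ?thesis using F(3) by blast
qed


section \<open>Votes\<close>

definition pattern :: "'a \<Rightarrow> 'a \<Rightarrow> 'c" where
  "pattern v u = (if u = v then r1 else r0)"

(* Indexing the block by pairs (u, w) makes the patterns of two different votes differ at
   |underS r c| coordinates, so a vote survives fewer changes than that and is unique. *)
definition votes :: "('a \<Rightarrow> 'c) \<Rightarrow> 'a \<Rightarrow> 'a \<Rightarrow> 'a \<Rightarrow> bool" where
  "votes x \<beta> c v \<longleftrightarrow> v \<in> underS r c \<and> \<not> finite (underS r c) \<and>
     |{p \<in> underS r c \<times> underS r c. x (code4 (\<beta>, c, p)) \<noteq> pattern v (fst p)}| <o |underS r c|"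

lemma votes_unique:
  assumes "votes x \<beta> c v" "votes x \<beta> c w" shows "v = w"
proof (rule ccontr)
  assume vw: "v \<noteq> w"
  let ?U = "underS r c"
  let ?E = "\<lambda>v. {p \<in> ?U \<times> ?U. x (code4 (\<beta>, c, p)) \<noteq> pattern v (fst p)}"
  have U: "\<not> finite ?U" "v \<in> ?U" and E: "|?E v| <o |?U|" "|?E w| <o |?U|"
    using assms unfolding votes_def by auto
  have "Pair v ` ?U \<subseteq> ?E v \<union> ?E w"
    using U(2) vw r0_neq_r1 by (auto simp: pattern_def)
  hence "|Pair v ` ?U| \<le>o |?E v \<union> ?E w|" by (rule card_of_mono1)
  moreover have "bij_betw (Pair v) ?U (Pair v ` ?U)" by (rule bij_betw_imageI) (auto simp: inj_on_def)
  hence "|?U| =o |Pair v ` ?U|" by (rule card_of_ordIsoI)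
  ultimately have "|?U| \<le>o |?E v \<union> ?E w|" using ordIso_ordLeq_trans by blast
  moreover have "|?E v \<union> ?E w| <o |?U|" by (rule card_of_Un_ordLess_infinite[OF U(1) E])
  ultimately show False using not_ordLess_ordLeq by blast
qed

lemma small_votes: "small {v. \<exists>c\<in>cof_set. votes x \<beta> c v}"
proof -
  let ?S = "{v. \<exists>c\<in>cof_set. votes x \<beta> c v}"
  have "?S \<subseteq> (\<lambda>c. THE v. votes x \<beta> c v) ` cof_set"
  proof
    fix v assume "v \<in> ?S"
    then obtain c where c: "c \<in> cof_set" "votes x \<beta> c v" by blast
    hence "(THE v. votes x \<beta> c v) = v" using votes_unique by (intro the_equality) blast+
    thus "v \<in> (\<lambda>c. THE v. votes x \<beta> c v) ` cof_set" using c(1) by blast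
  qed
  hence "|?S| \<le>o |cof_set|" using card_of_mono1 card_of_image ordLeq_transitive by blast
  hence "|?S| <o r" using cof_set_ordLess_r by (rule ordLeq_ordLess_trans)
  moreover have "?S \<subseteq> Field r" by (auto simp: votes_def dest: underS_Field)
  ultimately show ?thesis by (simp add: small_subsets_def)
qed

lemma votesI:
  assumes "\<beta> \<in> Field r" "c \<in> Field r" "v \<in> underS r c" "\<not> finite (underS r c)"
    and L: "|L| <o |underS r c|"
    and agree: "\<And>p. p \<in> underS r c \<times> underS r c \<Longrightarrow> code4 (\<beta>, c, p) \<notin> L \<Longrightarrow>
                  x (code4 (\<beta>, c, p)) = pattern v (fst p)"
  shows "votes x \<beta> c v"
proof -
  let ?U = "underS r c"
  let ?H = "{p \<in> ?U \<times> ?U. code4 (\<beta>, c, p) \<in> L}"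
  have "inj_on (\<lambda>p. code4 (\<beta>, c, p)) ?H"
    using inj_on_code4_block[OF assms(1,2)] by (rule inj_on_subset) blast
  hence "|?H| \<le>o |L|" by (intro card_of_ordLeqI[where f = "\<lambda>p. code4 (\<beta>, c, p)"]) auto
  moreover have "{p \<in> ?U \<times> ?U. x (code4 (\<beta>, c, p)) \<noteq> pattern v (fst p)} \<subseteq> ?H"
    using agree by blast
  ultimately have "|{p \<in> ?U \<times> ?U. x (code4 (\<beta>, c, p)) \<noteq> pattern v (fst p)}| <o |?U|"
    using card_of_mono1 ordLeq_transitive ordLeq_ordLess_trans L by blast
  thus ?thesis using assms(3,4) by (simp add: votes_def)
qed


lemma forcing_votes:
  assumes B: "small B" and c: "c \<in> Field r" "\<not> finite (underS r c)"
    and L: "small L" "|L| <o |underS r c|"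
    and e: "\<forall>\<beta>\<in>B. e \<beta> \<in> underS r c" and y: "y \<in> space"
  shows "\<exists>q. condition q \<and> extends (L, y) q \<and>
               (\<forall>x\<in>cyl_of q. \<forall>\<beta>\<in>B. votes x \<beta> c (e \<beta>))"
proof -
  let ?U = "underS r c"
  let ?X = "B \<times> {c} \<times> ?U \<times> ?U"
  let ?F4 = "Field r \<times> Field r \<times> Field r \<times> Field r"
  have XF: "?X \<subseteq> ?F4" using B c(1) by (auto simp: small_subsets_def dest: underS_Field)
  define E where "E = code4 ` ?X"
  define z where "z \<delta> = (if \<delta> \<in> E - L
      then (let (\<beta>, _, u, _) = inv_into ?F4 code4 \<delta> in pattern (e \<beta>) u) else y \<delta>)" for \<delta>
  have "|?X| <o r"
    using B small_underS[OF c(1)] finite_ordLess_r[of "{c}"]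
    by (auto simp: small_subsets_def intro!: Times_ordLess_r)
  hence "|E| <o r" unfolding E_def using card_of_image ordLeq_ordLess_trans by blast
  moreover have "E \<subseteq> Field r" unfolding E_def using image_mono[OF XF] code4(2) by (rule order_trans)
  ultimately have "small E" by (simp add: small_subsets_def)
  moreover have "y \<delta> \<in> R" if "\<delta> \<in> L" for \<delta> using y L(1) that by (auto simp: small_subsets_def)
  ultimately have cond: "condition (L \<union> E, z)"
    using small_Un[OF L(1)] r0_in_R r1_in_R
    by (auto simp: condition_def z_def pattern_def split: prod.split)
  have ext: "extends (L, y) (L \<union> E, z)" by (simp add: extends_def z_def)
  have "votes x \<beta> c (e \<beta>)" if x: "x \<in> cyl_of (L \<union> E, z)" and \<beta>: "\<beta> \<in> B" for x \<beta>
  proof (rule votesI[where L = L])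
    fix p assume p: "p \<in> ?U \<times> ?U" "code4 (\<beta>, c, p) \<notin> L"
    have "(\<beta>, c, p) \<in> ?X" using p(1) \<beta> by auto
    hence "inv_into ?F4 code4 (code4 (\<beta>, c, p)) = (\<beta>, c, p)" and "code4 (\<beta>, c, p) \<in> E"
      using inv_into_f_f[OF code4(1)] XF unfolding E_def by blast+
    hence "z (code4 (\<beta>, c, p)) = pattern (e \<beta>) (fst p)" using p(2) by (simp add: z_def case_prod_beta)
    thus "x (code4 (\<beta>, c, p)) = pattern (e \<beta>) (fst p)"
      using x \<open>code4 (\<beta>, c, p) \<in> E\<close> by (simp add: cyl_def)
  qed (use B c L e \<beta> in \<open>auto simp: small_subsets_def\<close>)
  thus ?thesis using cond ext by (intro exI[of _ "(L \<union> E, z)"]) simp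
qed

end

section \<open>Decoding points and the bound on q_\<mu>(\<nu>)\<close>

(* dec \<beta> x is the element of \<nu> (indexed by N via code) that x encodes on support \<beta>. *)
locale decoding = box_space k r R r0 r1
  for k :: "'b rel" and r :: "'a rel" and R :: "'c set" and r0 r1 :: 'c +
  fixes N :: "'n set" and code :: "'n \<Rightarrow> 'w" and dec :: "'a \<Rightarrow> ('a \<Rightarrow> 'c) \<Rightarrow> 'w"
    and support :: "'a \<Rightarrow> 'a set"
  assumes inj_code: "inj_on code N"
    and small_support: "c \<in> Field r \<Longrightarrow> small (\<Union>\<beta>\<in>underS r c. support \<beta>)"
    and dec_local: "x \<in> space \<Longrightarrow> y \<in> space \<Longrightarrow> \<forall>\<delta>\<in>support \<beta>. x \<delta> = y \<delta> \<Longrightarrow>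
                    dec \<beta> x = dec \<beta> y"
    and dec_onto: "n \<in> N \<Longrightarrow>
                   \<exists>\<beta>\<in>Field r. \<exists>p. condition p \<and> (\<forall>x\<in>cyl_of p. dec \<beta> x = code n)"
begin

definition assigned :: "('n \<Rightarrow> 'a set) \<Rightarrow> 'w \<Rightarrow> 'a set" where
  "assigned g w = (if w \<in> code ` N then g (inv_into N code w) else {})"

definition captured :: "('n \<Rightarrow> 'a set) \<Rightarrow> 'a \<Rightarrow> 'a \<Rightarrow> ('a \<Rightarrow> 'c) set" where
  "captured g c d = {x \<in> space. \<exists>\<beta>\<in>underS r c. |assigned g (dec \<beta> x)| \<le>o |underS r d| \<and>
      (\<forall>c'\<in>cof_set. \<forall>v. votes x \<beta> c' v \<longrightarrow> v \<in> assigned g (dec \<beta> x))}"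

(* Beyond the coordinates L read by the decodings below c, a fresh block c' receives at every
   level a vote outside the assigned set. *)
lemma nowhere_dense_captured:
  assumes c: "c \<in> Field r" and d: "d \<in> Field r"
  shows "nowhere_dense_in T (captured g c d)"
proof (rule nowhere_denseI)
  show "captured g c d \<subseteq> space" by (auto simp: captured_def)
next
  fix A y assume A: "small A" and y: "y \<in> space"
  define L where "L = A \<union> (\<Union>\<beta>\<in>underS r c. support \<beta>) \<union> underS r d"
  have L: "small L" unfolding L_def using A small_support[OF c] small_underS[OF d] by (intro small_Un)
  then obtain c' where c': "c' \<in> cof_set" "|L| <o |underS r c'|" "\<not> finite (underS r c')"
    using exists_cof_set_large_block by blast
  have c'F: "c' \<in> Field r" using c'(1) cof_set(1) by blast
  have "|underS r d| \<le>o |L|" unfolding L_def by (rule card_of_mono1) blast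
  hence dc': "|underS r d| <o |underS r c'|" using c'(2) by (rule ordLeq_ordLess_trans)
  have "\<exists>v\<in>underS r c'. |assigned g (dec \<beta> y)| \<le>o |underS r d| \<longrightarrow> v \<notin> assigned g (dec \<beta> y)"
    for \<beta>
  proof (cases "|assigned g (dec \<beta> y)| \<le>o |underS r d|")
    case True
    thus ?thesis using ex_not_in_ordLess ordLeq_ordLess_trans[OF True dc'] by blast
  next
    case False
    obtain v where "v \<in> underS r c'" using c'(3) by fastforce
    thus ?thesis using False by blast
  qed
  then obtain e where e: "\<And>\<beta>. e \<beta> \<in> underS r c' \<and>
      ( |assigned g (dec \<beta> y)| \<le>o |underS r d| \<longrightarrow> e \<beta> \<notin> assigned g (dec \<beta> y))"
    by metis
  obtain q where q: "condition q" "extends (L, y) q"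
      "\<forall>x\<in>cyl_of q. \<forall>\<beta>\<in>underS r c. votes x \<beta> c' (e \<beta>)"
    using forcing_votes[OF small_underS[OF c] c'F c'(3) L c'(2) _ y, of e] e by blast
  have "x \<notin> captured g c d" if x: "x \<in> cyl_of q" for x
  proof
    assume "x \<in> captured g c d"
    then obtain \<beta> where \<beta>: "\<beta> \<in> underS r c" "|assigned g (dec \<beta> x)| \<le>o |underS r d|"
        "\<forall>c''\<in>cof_set. \<forall>v. votes x \<beta> c'' v \<longrightarrow> v \<in> assigned g (dec \<beta> x)"
      unfolding captured_def by blast
    have "\<forall>\<delta>\<in>L. x \<delta> = y \<delta>" using x q(2) by (auto simp: extends_def cyl_def)
    hence "\<forall>\<delta>\<in>support \<beta>. x \<delta> = y \<delta>" using \<beta>(1) by (auto simp: L_def)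
    moreover have "x \<in> space" using cyl_subset_space x by (rule subsetD)
    ultimately have dec: "dec \<beta> x = dec \<beta> y" using dec_local y by blast
    have "votes x \<beta> c' (e \<beta>)" using q(3) x \<beta>(1) by blast
    hence "e \<beta> \<in> assigned g (dec \<beta> y)" using \<beta>(3) c'(1) by (simp add: dec)
    thus False using e[of \<beta>] \<beta>(2) dec by simp
  qed
  hence "cyl_of q \<inter> captured g c d = {}" by blast
  moreover have "extends (A, y) q" using q(2) by (auto simp: extends_def L_def)
  ultimately show "\<exists>q. condition q \<and> extends (A, y) q \<and> cyl_of q \<inter> captured g c d = {}"
    using q(1) by blast
qed

lemma meagre_captured: "(\<Union>(c, d)\<in>cof_set \<times> cof_set. captured g c d) \<in> meagre_ideal k T"
proof -
  let ?F = "(\<lambda>(c, d). captured g c d) ` (cof_set \<times> cof_set)"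
  have "|?F| \<le>o |cof_set \<times> cof_set|" by (rule card_of_image)
  also have "|cof_set \<times> cof_set| =o |cof_set|"
    using infinite_cof_set by (rule card_of_Times_same_infinite)
  also have "|cof_set| =o k" by (rule cof_set(3))
  finally have "|?F| \<le>o k" .
  moreover have "\<forall>M\<in>?F. nowhere_dense_in T M"
    using nowhere_dense_captured cof_set(1) by auto
  ultimately show ?thesis unfolding meagre_ideal_def by blast
qed

lemma exists_decoding_point_outside:
  assumes B: "B \<in> meagre_ideal k T" and n: "n \<in> N"
  shows "\<exists>\<beta> x. \<beta> \<in> Field r \<and> x \<in> space \<and> dec \<beta> x = code n \<and> x \<notin> B"
proof -
  obtain \<beta> p where \<beta>: "\<beta> \<in> Field r" and p: "condition p" "\<forall>x\<in>cyl_of p. dec \<beta> x = code n"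
    using dec_onto[OF n] by blast
  obtain x where x: "x \<in> cyl_of p" "x \<notin> B" using meagre_avoids_cyl[OF B p(1)] by blast
  have "x \<in> space" using cyl_subset_space x(1) by (rule subsetD)
  thus ?thesis using \<beta> p(2) x by blast
qed

lemma votes_escape:
  assumes x: "x \<in> space" "x \<notin> (\<Union>(c, d)\<in>cof_set \<times> cof_set. captured g c d)"
    and \<beta>: "\<beta> \<in> Field r" and n: "n \<in> N" "dec \<beta> x = code n" and g: "small (g n)"
  shows "\<exists>c\<in>cof_set. \<exists>v. votes x \<beta> c v \<and> v \<notin> g n"
proof -
  have assigned: "assigned g (dec \<beta> x) = g n" using inj_code n by (simp add: assigned_def)
  obtain c where c: "c \<in> cof_set" "\<beta> \<in> underS r c" using exists_cof_set_above[OF \<beta>] by blast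
  obtain d where d: "d \<in> cof_set" "|g n| <o |underS r d|"
    using exists_cof_set_greater g by (auto simp: small_subsets_def)
  have "x \<notin> captured g c d" using x(2) c(1) d(1) by blast
  moreover have "|assigned g (dec \<beta> x)| \<le>o |underS r d|"
    using ordLess_imp_ordLeq[OF d(2)] by (simp add: assigned)
  ultimately have "\<not> (\<forall>c'\<in>cof_set. \<forall>v. votes x \<beta> c' v \<longrightarrow> v \<in> assigned g (dec \<beta> x))"
    using x(1) c(2) unfolding captured_def by blast
  thus ?thesis unfolding assigned by blast
qed

theorem q_le_cof_meagre: "q_le_cof r N (meagre_ideal k T)"
  unfolding q_le_cof_def
proof (intro allI impI)
  fix F assume F: "cofinal_family (meagre_ideal k T) F"
  define pt where "pt B n = (SOME (\<beta>, x). \<beta> \<in> Field r \<and> x \<in> space \<and> dec \<beta> x = code n \<and> x \<notin> B)"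
    for B n
  have pt: "fst (pt B n) \<in> Field r \<and> snd (pt B n) \<in> space \<and>
      dec (fst (pt B n)) (snd (pt B n)) = code n \<and> snd (pt B n) \<notin> B" if "B \<in> F" "n \<in> N" for B n
  proof -
    have "B \<in> meagre_ideal k T" using F that(1) by (auto simp: cofinal_family_def)
    hence "\<exists>q. fst q \<in> Field r \<and> snd q \<in> space \<and> dec (fst q) (snd q) = code n \<and> snd q \<notin> B"
      using exists_decoding_point_outside that(2) by auto
    hence "case pt B n of (\<beta>, x) \<Rightarrow> \<beta> \<in> Field r \<and> x \<in> space \<and> dec \<beta> x = code n \<and> x \<notin> B"
      unfolding pt_def by (intro someI_ex[of "\<lambda>(\<beta>, x). _ \<beta> x"]) (simp add: case_prod_beta)
    thus ?thesis by (simp add: case_prod_beta)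
  qed
  define f where "f B = restrict (\<lambda>n. {v. \<exists>c\<in>cof_set. votes (snd (pt B n)) (fst (pt B n)) c v}) N" for B
  have "q_family r N (f ` F)"
    unfolding q_family_def
  proof (intro conjI ballI)
    show "f ` F \<subseteq> N \<rightarrow>\<^sub>E small_subsets r" using small_votes by (auto simp: f_def)
  next
    fix g assume g: "g \<in> N \<rightarrow>\<^sub>E small_subsets r"
    obtain B where B: "B \<in> F" "(\<Union>(c, d)\<in>cof_set \<times> cof_set. captured g c d) \<subseteq> B"
      using F meagre_captured unfolding cofinal_family_def by blast
    have "\<not> f B n \<subseteq> g n" if n: "n \<in> N" for n
    proof -
      have x: "snd (pt B n) \<notin> (\<Union>(c, d)\<in>cof_set \<times> cof_set. captured g c d)"
        using pt[OF B(1) n] B(2) by blast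
      have "small (g n)" using g n by blast
      then obtain c v where "c \<in> cof_set" "votes (snd (pt B n)) (fst (pt B n)) c v" "v \<notin> g n"
        using votes_escape[OF _ x _ n] pt[OF B(1) n] by blast
      thus ?thesis using n by (auto simp: f_def)
    qed
    thus "\<exists>f'\<in>f ` F. \<forall>n\<in>N. \<not> f' n \<subseteq> g n" using B(1) by blast
  qed
  thus "\<exists>Q. q_family r N Q \<and> |Q| \<le>o |F|" using card_of_image by blast
qed

end

context singular_cofinality
begin

lemma two_points_Field_r: "\<exists>r0 r1. r0 \<in> Field r \<and> r1 \<in> Field r \<and> r0 \<noteq> r1"
proof -
  obtain r0 where r0: "r0 \<in> Field r" using infinite_r by fastforce
  have "\<not> finite (Field r - {r0})" using infinite_r by (rule infinite_remove)
  then obtain r1 where "r1 \<in> Field r - {r0}" using infinite_imp_nonempty by blast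
  thus ?thesis using r0 by blast
qed

lemma q_le_cof_Field:
  assumes "|N| =o |lt_pow r (Field r)|"
  shows "q_le_cof r N (meagre_ideal k (box_top r (Field r)))"
proof -
  obtain Phi where Phi: "bij_betw Phi N (lt_pow r (Field r))"
    using assms card_of_ordIso by blast
  obtain r0 r1 where r01: "r0 \<in> Field r" "r1 \<in> Field r" "r0 \<noteq> r1"
    using two_points_Field_r by blast
  have BS: "box_space k r (Field r) r0 r1" using r01 by unfold_locales
  interpret B: box_space k r "Field r" r0 r1 by (rule BS)
  have "decoding k r (Field r) r0 r1 N Phi (\<lambda>\<beta> x. restrict x (underS r \<beta>)) (underS r)"
  proof (rule decoding.intro[OF BS], rule decoding_axioms.intro)
    show "inj_on Phi N" using Phi by (rule bij_betw_imp_inj_on)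
  next
    fix c assume c: "c \<in> Field r"
    have "(\<Union>\<beta>\<in>underS r c. underS r \<beta>) \<subseteq> underS r c"
      using underS_subset_underS[OF Well_order_r] by blast
    thus "small (\<Union>\<beta>\<in>underS r c. underS r \<beta>)" by (rule small_subset[OF small_underS[OF c]])
  next
    fix \<beta> and x y :: "'a \<Rightarrow> 'a" assume "\<forall>\<delta>\<in>underS r \<beta>. x \<delta> = y \<delta>"
    thus "restrict x (underS r \<beta>) = restrict y (underS r \<beta>)" by (intro restrict_ext) auto
  next
    fix n assume n: "n \<in> N"
    obtain a where a: "a \<in> Field r" "Phi n \<in> underS r a \<rightarrow>\<^sub>E Field r"
      using bij_betw_apply[OF Phi n] by (auto simp: lt_pow_def)
    have "B.condition (underS r a, Phi n)"
      using small_underS[OF a(1)] a(2) by (auto simp: B.condition_def)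
    moreover have "restrict x (underS r a) = Phi n" if "x \<in> B.cy (underS r a) (Phi n)" for x
      using that a(2) by (auto simp: cyl_def fun_eq_iff)
    ultimately show "\<exists>\<beta>\<in>Field r. \<exists>p. B.condition p \<and> (\<forall>x\<in>B.cyl_of p. restrict x (underS r \<beta>) = Phi n)"
      using a(1) by auto
  qed
  then interpret decoding k r "Field r" r0 r1 N Phi "\<lambda>\<beta> x. restrict x (underS r \<beta>)" "underS r" .
  show ?thesis by (rule q_le_cof_meagre)
qed

(* A point of {}^\<mu>2 encodes \<alpha> \<mapsto> \<eta> by its bit at p (\<alpha>, \<eta>), for a pairing p of \<mu> \<times> \<kappa> into \<mu>. *)
definition decode_bits :: "('a \<times> 'b \<Rightarrow> 'a) \<Rightarrow> 'a \<Rightarrow> ('a \<Rightarrow> bool) \<Rightarrow> 'a \<Rightarrow> 'b" where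
  "decode_bits p \<beta> x \<alpha> = (if \<alpha> \<in> underS r \<beta> \<and> (\<exists>\<eta>\<in>Field k. x (p (\<alpha>, \<eta>)))
     then SOME \<eta>. \<eta> \<in> Field k \<and> x (p (\<alpha>, \<eta>)) else undefined)"

lemma decode_bits_local:
  "\<forall>\<delta>\<in>p ` (underS r \<beta> \<times> Field k). x \<delta> = y \<delta> \<Longrightarrow> decode_bits p \<beta> x = decode_bits p \<beta> y"
  unfolding decode_bits_def by (intro ext) (simp cong: conj_cong)

lemma decode_bits_eq:
  assumes \<phi>: "\<phi> \<in> underS r \<beta> \<rightarrow>\<^sub>E Field k"
    and x: "\<forall>\<alpha>\<in>underS r \<beta>. \<forall>\<eta>\<in>Field k. x (p (\<alpha>, \<eta>)) = (\<phi> \<alpha> = \<eta>)"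
  shows "decode_bits p \<beta> x = \<phi>"
proof
  fix \<alpha>
  show "decode_bits p \<beta> x \<alpha> = \<phi> \<alpha>"
  proof (cases "\<alpha> \<in> underS r \<beta>")
    case True
    hence "\<phi> \<alpha> \<in> Field k" using \<phi> by auto
    moreover have "(SOME \<eta>. \<eta> \<in> Field k \<and> x (p (\<alpha>, \<eta>))) = \<phi> \<alpha>"
      using x True \<open>\<phi> \<alpha> \<in> Field k\<close> by (intro some_equality) auto
    ultimately show ?thesis using x True by (auto simp: decode_bits_def)
  next
    case False
    thus ?thesis using PiE_arb[OF \<phi> False] by (simp add: decode_bits_def)
  qed
qed

lemma q_le_cof_bool:
  assumes "|N| =o |lt_pow r (Field k)|"
  shows "q_le_cof r N (meagre_ideal k (box_top r (UNIV :: bool set)))"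
proof -
  obtain Phi where Phi: "bij_betw Phi N (lt_pow r (Field k))"
    using assms card_of_ordIso by blast
  have "|Field k| \<le>o |Field r|"
    using ordLess_imp_ordLeq[OF Field_k_ordLess_r] card_of_Field_ordIso[OF Card_order_r]
      ordLeq_ordIso_trans ordIso_symmetric by blast
  hence "|Field r \<times> Field k| \<le>o |Field r|" by (rule Times_Field_r_absorb)
  then obtain p where p: "inj_on p (Field r \<times> Field k)" "p ` (Field r \<times> Field k) \<subseteq> Field r"
    by (auto simp: card_of_ordLeq[symmetric])
  define support where "support \<beta> = p ` (underS r \<beta> \<times> Field k)" for \<beta>
  have small_support: "small (support c)" if c: "c \<in> Field r" for c
  proof -
    have "|underS r c \<times> Field k| <o r"
      using Times_ordLess_r[OF card_of_underS[OF Card_order_r c] Field_k_ordLess_r] .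
    hence "|support c| <o r" unfolding support_def using card_of_image ordLeq_ordLess_trans by blast
    moreover have "support c \<subseteq> Field r" unfolding support_def using p(2) by (auto dest: underS_Field)
    ultimately show ?thesis by (simp add: small_subsets_def)
  qed
  have BS: "box_space k r (UNIV :: bool set) False True" by unfold_locales auto
  interpret B: box_space k r "UNIV :: bool set" False True by (rule BS)
  have "decoding k r (UNIV :: bool set) False True N Phi (decode_bits p) support"
  proof (rule decoding.intro[OF BS], rule decoding_axioms.intro)
    show "inj_on Phi N" using Phi by (rule bij_betw_imp_inj_on)
  next
    fix c assume c: "c \<in> Field r"
    have "(\<Union>\<beta>\<in>underS r c. support \<beta>) \<subseteq> support c"
      unfolding support_def using underS_subset_underS[OF Well_order_r] by blast
    thus "small (\<Union>\<beta>\<in>underS r c. support \<beta>)" by (rule small_subset[OF small_support[OF c]])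
  next
    fix \<beta> and x y :: "'a \<Rightarrow> bool" assume "\<forall>\<delta>\<in>support \<beta>. x \<delta> = y \<delta>"
    thus "decode_bits p \<beta> x = decode_bits p \<beta> y" unfolding support_def by (rule decode_bits_local)
  next
    fix n assume n: "n \<in> N"
    obtain a where a: "a \<in> Field r" "Phi n \<in> underS r a \<rightarrow>\<^sub>E Field k"
      using bij_betw_apply[OF Phi n] by (auto simp: lt_pow_def)
    define s where "s q = (case inv_into (Field r \<times> Field k) p q of (\<alpha>, \<eta>) \<Rightarrow> Phi n \<alpha> = \<eta>)" for q
    have "B.condition (support a, s)"
      using small_support[OF a(1)] by (simp add: B.condition_def)
    moreover have "decode_bits p a x = Phi n" if x: "x \<in> B.cy (support a) s" for x
    proof (rule decode_bits_eq[OF a(2)], intro ballI)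
      fix \<alpha> \<eta> assume "\<alpha> \<in> underS r a" "\<eta> \<in> Field k"
      hence "(\<alpha>, \<eta>) \<in> Field r \<times> Field k" "p (\<alpha>, \<eta>) \<in> support a"
        by (auto simp: support_def dest: underS_Field)
      thus "x (p (\<alpha>, \<eta>)) = (Phi n \<alpha> = \<eta>)"
        using x inv_into_f_f[OF p(1)] by (auto simp: cyl_def s_def)
    qed
    ultimately show "\<exists>\<beta>\<in>Field r. \<exists>q. B.condition q \<and> (\<forall>x\<in>B.cyl_of q. decode_bits p \<beta> x = Phi n)"
      using a(1) by auto
  qed
  then interpret decoding k r "UNIV :: bool set" False True N Phi "decode_bits p" support .
  show ?thesis by (rule q_le_cof_meagre)
qed

end

theorem mainTheorem19:
  fixes k :: "'b rel" and r :: "'a rel" and N1 :: "'n set" and N2 :: "'m set"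
  assumes "Card_order k" and "\<not> finite (Field k)" and "regularCard k"
    and "Card_order r" and "\<not> finite (Field r)" and "ordLess2 k r" and "cf_is r k"
  shows "(ordIso2 (card_of N1) (card_of (lt_pow r (Field r))) \<longrightarrow>
            q_le_cof r N1 (meagre_ideal k (box_top r (Field r))))
       \<and> (ordIso2 (card_of N2) (card_of (lt_pow r (Field k))) \<longrightarrow>
            q_le_cof r N2 (meagre_ideal k (box_top r (UNIV :: bool set))))"
proof -
  interpret singular_cofinality k r using assms by unfold_locales
  show ?thesis using q_le_cof_Field q_le_cof_bool by blast
qed

end
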